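(* Let $n\ge1$, $0\le k\le n$, $D^\star\in(0,1)$, $\varepsilon\in(0,D^\star)$ and $\rho=\varepsilon(D^\star-\varepsilon)/(2n)$. Consider the set $\mathcal F_k$ of $\lambda\in\mathcal L_n$ such that, with $t=t_{\mathrm{wf}}(\lambda,D^\star)$, we have $\lambda_i\ge t+\rho$ for all $i\le k$ and $0\le\lambda_i\le t-\rho$ for all $i>k$. Then every maximizer $\lambda^\star$ of $G(\lambda)=\mathbf R_{\mathrm{rc}}(\lambda,D^\star)-\mathbf R_{\mathrm{wf}}(\lambda,D^\star)$ over $\mathcal F_k$ has at most $5$ distinct coordinate values, i.e. $|\{\lambda^\star_1,\dots,\lambda^\star_n\}|\le5$.
   Context: Logarithms are base 2. $\mathcal L_n=\{\lambda\in\mathbb R^n_{\ge0}:\sum_i\lambda_i=n\}$. For $\lambda\in\mathcal L_n$ and $T,t>0$: $D_{\mathrm{rc}}(\lambda,T)=\frac1n\sum_i\frac{\lambda_i}{1+\lambda_iT}$, $R_{\mathrm{rc}}(\lambda,T)=\frac1{2n}\sum_i\log(1+\lambda_iT)$, $D_{\mathrm{wf}}(\lambda,t)=\frac1n\sum_i\min\{\lambda_i,t\}$, $R_{\mathrm{wf}}(\lambda,t)=\frac1{2n}\sum_i\max\{0,\log(\lambda_i/t)\}$. For $D\in(0,1)$, $T_{\mathrm{rc}}(\lambda,D)$ is the unique $T>0$ with $D_{\mathrm{rc}}(\lambda,T)=D$, and $t_{\mathrm{wf}}(\lambda,D)$ is the unique $t\in(0,\max_i\lambda_i)$ with $D_{\mathrm{wf}}(\lambda,t)=D$.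 Set $\mathbf R_{\mathrm{rc}}(\lambda,D)=R_{\mathrm{rc}}(\lambda,T_{\mathrm{rc}}(\lambda,D))$ and $\mathbf R_{\mathrm{wf}}(\lambda,D)=R_{\mathrm{wf}}(\lambda,t_{\mathrm{wf}}(\lambda,D))$. *)

theory Defs
  imports Complex_Main
begin

text \<open>Vectors lambda in R^n are represented as functions nat => real, with
 coordinates indexed by 1..n (values outside 1..n are irrelevant).
 Logarithms are base 2.\<close>

definition Lset :: "nat \<Rightarrow> (nat \<Rightarrow> real) set" where
  "Lset n = {lam. (\<forall>i\<in>{1..n}. 0 \<le> lam i) \<and> (\<Sum>i=1..n. lam i) = real n}"

definition D_rc :: "nat \<Rightarrow> (nat \<Rightarrow> real) \<Rightarrow> real \<Rightarrow> real" where
  "D_rc n lam T = (1 / real n) * (\<Sum>i=1..n. lam i / (1 + lam i * T))"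

definition R_rc :: "nat \<Rightarrow> (nat \<Rightarrow> real) \<Rightarrow> real \<Rightarrow> real" where
  "R_rc n lam T = (1 / (2 * real n)) * (\<Sum>i=1..n. log 2 (1 + lam i * T))"

definition D_wf :: "nat \<Rightarrow> (nat \<Rightarrow> real) \<Rightarrow> real \<Rightarrow> real" where
  "D_wf n lam t = (1 / real n) * (\<Sum>i=1..n. min (lam i) t)"

definition R_wf :: "nat \<Rightarrow> (nat \<Rightarrow> real) \<Rightarrow> real \<Rightarrow> real" where
  "R_wf n lam t = (1 / (2 * real n)) * (\<Sum>i=1..n. max 0 (log 2 (lam i / t)))"

definition T_rc :: "nat \<Rightarrow> (nat \<Rightarrow> real) \<Rightarrow> real \<Rightarrow> real" where
  "T_rc n lam D = (THE T. T > 0 \<and> D_rc n lam T = D)"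

definition t_wf :: "nat \<Rightarrow> (nat \<Rightarrow> real) \<Rightarrow> real \<Rightarrow> real" where
  "t_wf n lam D = (THE t. 0 < t \<and> t < Max (lam ` {1..n}) \<and> D_wf n lam t = D)"

definition RR_rc :: "nat \<Rightarrow> (nat \<Rightarrow> real) \<Rightarrow> real \<Rightarrow> real" where
  "RR_rc n lam D = R_rc n lam (T_rc n lam D)"

definition RR_wf :: "nat \<Rightarrow> (nat \<Rightarrow> real) \<Rightarrow> real \<Rightarrow> real" where
  "RR_wf n lam D = R_wf n lam (t_wf n lam D)"

definition Gap :: "nat \<Rightarrow> real \<Rightarrow> (nat \<Rightarrow> real) \<Rightarrow> real" where
  "Gap n D lam = RR_rc n lam D - RR_wf n lam D"

definition Fset :: "nat \<Rightarrow> nat \<Rightarrow> real \<Rightarrow> real \<Rightarrow> (nat \<Rightarrow> real) set" where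
  "Fset n k D rho = {lam. lam \<in> Lset n \<and>
     (let t = t_wf n lam D in
        (\<forall>i\<in>{1..k}. t + rho \<le> lam i) \<and>
        (\<forall>i\<in>{k+1..n}. 0 \<le> lam i \<and> lam i \<le> t - rho))}"

end

theory Submission
  imports Defs
begin

text \<open>
  Fix a maximiser \<open>\<lambda>\<close> of the gap on F_k, its water level t and its reverse-channel
  parameter T. Replacing some coordinates of \<open>\<lambda>\<close> by values with the same sum, inside the
  box constraints of F_k, and without decreasing D_rc(-, T), gives a competitor \<open>\<lambda>'\<close> with
  the same water level and with T_rc(\<open>\<lambda>'\<close>, D) \<open>\<ge>\<close> T. Its gap is therefore at least
  R_rc(\<open>\<lambda>'\<close>, T) - R_wf(\<open>\<lambda>'\<close>, t), a sum of one term per coordinate, so no such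
  replacement can increase that sum.

  Below t the per-coordinate term is log(1 + x T), strictly concave: averaging two distinct
  coordinates i > k would increase it, so they are all equal. Above t it is
  log((1 + x T) / x) + log t. Four distinct coordinates above t + \<open>\<rho>\<close> admit a zero-sum
  direction increasing both \<open>\<Sum>\<close> x / (1 + x T) and \<open>\<Sum>\<close> log((1 + x T) / x) to first order:
  in the variable u = 1 / (1 + x T) the two derivatives are u^2 and -T u^2 / (1 - u), and a
  third divided difference separates them. Hence at most three values exceed t + \<open>\<rho>\<close>, and
  with t + \<open>\<rho>\<close> itself and the common small value there are at most five.
\<close>

section \<open>Water-filling level and reverse-channel parameter\<close>

lemma Lset_nonneg: "lam \<in> Lset n \<Longrightarrow> i \<in> {1..n} \<Longrightarrow> 0 \<le> lam i"
  unfolding Lset_def by auto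

lemma Lset_sum: "lam \<in> Lset n \<Longrightarrow> (\<Sum>i=1..n. lam i) = real n"
  unfolding Lset_def by auto

lemma Lset_has_positive:
  assumes "lam \<in> Lset n" "1 \<le> n"
  obtains j where "j \<in> {1..n}" "0 < lam j"
proof -
  have "0 < (\<Sum>i=1..n. lam i)"
    using Lset_sum[OF assms(1)] assms(2) by simp
  then show ?thesis
    using that sum_nonpos[of "{1..n}" lam] by (meson not_le)
qed

lemma Max_coordinate:
  fixes lam :: "nat \<Rightarrow> real"
  assumes "1 \<le> n"
  obtains j where "j \<in> {1..n}" "lam j = Max (lam ` {1..n})"
proof -
  have "Max (lam ` {1..n}) \<in> lam ` {1..n}"
    using assms by (auto intro!: Max_in)
  then show ?thesis
    using that by auto
qed

lemma sum_override_on: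
  fixes f :: "'b \<Rightarrow> 'c::ab_group_add"
  assumes "finite A" "I \<subseteq> A"
  shows "(\<Sum>x\<in>A. f (override_on g h I x))
         = (\<Sum>x\<in>A. f (g x)) - (\<Sum>x\<in>I. f (g x)) + (\<Sum>x\<in>I. f (h x))"
proof -
  have "(\<Sum>x\<in>A. f (override_on g h I x)) = (\<Sum>x\<in>A - I. f (g x)) + (\<Sum>x\<in>I. f (h x))"
    by (simp add: sum.subset_diff[OF assms(2,1)])
  moreover have "(\<Sum>x\<in>A. f (g x)) = (\<Sum>x\<in>A - I. f (g x)) + (\<Sum>x\<in>I. f (g x))"
    by (rule sum.subset_diff[OF assms(2,1)])
  ultimately show ?thesis
    by simp
qed

lemma Lset_override_on:
  assumes "lam \<in> Lset n" "I \<subseteq> {1..n}" "\<And>i. i \<in> I \<Longrightarrow> 0 \<le> h i" "sum h I = sum lam I"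
  shows "override_on lam h I \<in> Lset n"
proof -
  have "(\<Sum>i=1..n. override_on lam h I i) = real n"
    using sum_override_on[OF _ assms(2), of "\<lambda>x. x" lam h] assms(4) Lset_sum[OF assms(1)] by simp
  then show ?thesis
    using assms(1,3) unfolding Lset_def by (auto simp: override_on_def)
qed

lemma D_wf_strict_mono:
  assumes "1 \<le> n" "t1 < t2" "t1 < Max (lam ` {1..n})"
  shows "D_wf n lam t1 < D_wf n lam t2"
proof -
  obtain j where "j \<in> {1..n}" "lam j = Max (lam ` {1..n})"
    using assms(1) by (rule Max_coordinate)
  then have "\<exists>j\<in>{1..n}. min (lam j) t1 < min (lam j) t2"
    using assms(2,3) by (intro bexI[of _ j]) auto
  then have "(\<Sum>i=1..n. min (lam i) t1) < (\<Sum>i=1..n. min (lam i) t2)"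
    using assms(2) by (intro sum_strict_mono_ex1) auto
  then show ?thesis
    unfolding D_wf_def using assms(1) by (simp add: divide_strict_right_mono)
qed

lemma t_wf_eqI:
  assumes "1 \<le> n" "0 < t" "t < Max (lam ` {1..n})" "D_wf n lam t = D"
  shows "t_wf n lam D = t"
  unfolding t_wf_def
proof (rule the_equality)
  fix t' assume t': "0 < t' \<and> t' < Max (lam ` {1..n}) \<and> D_wf n lam t' = D"
  show "t' = t"
  proof (rule ccontr)
    assume "t' \<noteq> t"
    then have "D_wf n lam (min t t') < D_wf n lam (max t t')"
      using assms t' by (intro D_wf_strict_mono) auto
    then show False
      using assms(4) t' by (auto simp: min_def max_def split: if_splits)
  qed
qed (use assms in auto)

lemma t_wf_spec:
  assumes "lam \<in> Lset n" "1 \<le> n" "0 < D" "D < 1"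
  shows "0 < t_wf n lam D" "t_wf n lam D < Max (lam ` {1..n})" "D_wf n lam (t_wf n lam D) = D"
proof -
  define M where "M = Max (lam ` {1..n})"
  have le_M: "lam i \<le> M" if "i \<in> {1..n}" for i
    unfolding M_def using that by auto
  have "0 \<le> M"
    using le_M[of 1] Lset_nonneg[OF assms(1), of 1] assms(2) by auto
  have "D_wf n lam 0 = 0"
    using Lset_nonneg[OF assms(1)] unfolding D_wf_def by (simp add: min_absorb2)
  moreover have "D_wf n lam M = 1"
    using le_M Lset_sum[OF assms(1)] assms(2) unfolding D_wf_def by (simp add: min_absorb1)
  moreover have "continuous_on {0..M} (D_wf n lam)"
    unfolding D_wf_def by (intro continuous_intros)
  ultimately obtain t where "0 \<le> t" "t \<le> M" "D_wf n lam t = D"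
    using IVT'[of "D_wf n lam" 0 D M] \<open>0 \<le> M\<close> assms(3,4) by auto
  moreover from this have "0 < t" "t < M"
    using \<open>D_wf n lam 0 = 0\<close> \<open>D_wf n lam M = 1\<close> assms(3,4) by (auto simp: le_less)
  ultimately have "t_wf n lam D = t"
    by (intro t_wf_eqI) (use assms(2) M_def in auto)
  then show "0 < t_wf n lam D" "t_wf n lam D < Max (lam ` {1..n})" "D_wf n lam (t_wf n lam D) = D"
    using \<open>0 < t\<close> \<open>t < M\<close> \<open>D_wf n lam t = D\<close> M_def by auto
qed

lemma D_wf_split:
  assumes "k \<le> n" "\<forall>i\<in>{1..k}. t \<le> lam i" "\<forall>i\<in>{Suc k..n}. lam i \<le> t"
  shows "D_wf n lam t = (real k * t + (\<Sum>i=Suc k..n. lam i)) / real n"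
proof -
  have "{1..n} = {1..k} \<union> {Suc k..n}"
    using assms(1) by auto
  then have "(\<Sum>i=1..n. min (lam i) t) = (\<Sum>i=1..k. min (lam i) t) + (\<Sum>i=Suc k..n. min (lam i) t)"
    by (simp add: sum.union_disjoint)
  also have "\<dots> = real k * t + (\<Sum>i=Suc k..n. lam i)"
    using assms(2,3) by (simp add: min_absorb1 min_absorb2)
  finally show ?thesis
    unfolding D_wf_def by simp
qed

lemma D_rc_strict_antimono:
  assumes "lam \<in> Lset n" "1 \<le> n" "0 \<le> T1" "T1 < T2"
  shows "D_rc n lam T2 < D_rc n lam T1"
proof -
  have denominators: "0 < 1 + x * T1" "0 < 1 + x * T2" "x * T1 \<le> x * T2" if "0 \<le> x" for x
    using that assms(3,4) by (simp_all add: add_pos_nonneg mult_left_mono)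
  have le: "lam i / (1 + lam i * T2) \<le> lam i / (1 + lam i * T1)" if "i \<in> {1..n}" for i
    using Lset_nonneg[OF assms(1) that] denominators[OF Lset_nonneg[OF assms(1) that]]
    by (intro divide_left_mono) (simp_all add: mult_pos_pos)
  obtain j where "j \<in> {1..n}" "0 < lam j"
    using assms(1,2) by (rule Lset_has_positive)
  then have "lam j / (1 + lam j * T2) < lam j / (1 + lam j * T1)"
    using denominators(1,2)[of "lam j"] assms(4) by (intro divide_strict_left_mono mult_pos_pos) auto
  then have "(\<Sum>i=1..n. lam i / (1 + lam i * T2)) < (\<Sum>i=1..n. lam i / (1 + lam i * T1))"
    using le \<open>j \<in> {1..n}\<close> by (intro sum_strict_mono_ex1) auto
  then show ?thesis
    unfolding D_rc_def using assms(2) by (simp add: divide_strict_right_mono)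
qed

lemma T_rc_spec:
  assumes "lam \<in> Lset n" "1 \<le> n" "0 < D" "D < 1"
  shows "0 < T_rc n lam D" "D_rc n lam (T_rc n lam D) = D"
proof -
  define B where "B = 2 / D"
  have "0 < B"
    using assms(3) unfolding B_def by simp
  have "D_rc n lam 0 = 1"
    unfolding D_rc_def using Lset_sum[OF assms(1)] assms(2) by simp
  have "(\<Sum>i=1..n. lam i / (1 + lam i * B)) \<le> (\<Sum>i=1..n. 1 / B)"
    using Lset_nonneg[OF assms(1)] \<open>0 < B\<close>
    by (intro sum_mono) (simp add: field_simps add_pos_nonneg)
  then have "D_rc n lam B \<le> D / 2"
    unfolding D_rc_def B_def using assms(2) by (simp add: field_simps)
  moreover have "continuous_on {0..B} (D_rc n lam)"
    unfolding D_rc_def using Lset_nonneg[OF assms(1)]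
    by (intro continuous_intros) (auto simp: add_nonneg_eq_0_iff)
  ultimately obtain T where T: "0 \<le> T" "T \<le> B" "D_rc n lam T = D"
    using IVT2'[of "D_rc n lam" B D 0] \<open>D_rc n lam 0 = 1\<close> \<open>0 < B\<close> assms(3,4) by auto
  then have "0 < T"
    using \<open>D_rc n lam 0 = 1\<close> assms(4) by (auto simp: le_less)
  have "T_rc n lam D = T"
    unfolding T_rc_def
  proof (rule the_equality)
    fix T' assume T': "0 < T' \<and> D_rc n lam T' = D"
    show "T' = T"
    proof (rule ccontr)
      assume "T' \<noteq> T"
      then have "D_rc n lam (max T T') < D_rc n lam (min T T')"
        using T' \<open>0 < T\<close> by (intro D_rc_strict_antimono[OF assms(1,2)]) auto
      then show False
        using T(3) T' by (auto simp: min_def max_def split: if_splits)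
    qed
  qed (use T \<open>0 < T\<close> in auto)
  then show "0 < T_rc n lam D" "D_rc n lam (T_rc n lam D) = D"
    using T \<open>0 < T\<close> by auto
qed

lemma R_rc_mono:
  assumes "lam \<in> Lset n" "0 < T1" "T1 \<le> T2"
  shows "R_rc n lam T1 \<le> R_rc n lam T2"
proof -
  have "(\<Sum>i=1..n. log 2 (1 + lam i * T1)) \<le> (\<Sum>i=1..n. log 2 (1 + lam i * T2))"
    using Lset_nonneg[OF assms(1)] assms(2,3)
    by (intro sum_mono) (simp add: add_pos_nonneg mult_left_mono)
  then show ?thesis
    unfolding R_rc_def by (simp add: divide_right_mono)
qed

lemma R_rc_le_RR_rc:
  assumes "lam \<in> Lset n" "1 \<le> n" "0 < D" "D < 1" "0 < T" "D \<le> D_rc n lam T"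
  shows "R_rc n lam T \<le> RR_rc n lam D"
proof -
  have "T \<le> T_rc n lam D"
  proof (rule ccontr)
    assume "\<not> T \<le> T_rc n lam D"
    then have "D_rc n lam T < D_rc n lam (T_rc n lam D)"
      using T_rc_spec[OF assms(1-4)] by (intro D_rc_strict_antimono[OF assms(1,2)]) auto
    then show False
      using T_rc_spec[OF assms(1-4)] assms(6) by simp
  qed
  then show ?thesis
    unfolding RR_rc_def using R_rc_mono[OF assms(1,5)] by blast
qed

lemma Fset_I:
  assumes "lam \<in> Lset n" "1 \<le> k" "k \<le> n" "0 < rho" "0 < t" "D_wf n lam t = D"
    and "\<forall>i\<in>{1..k}. t + rho \<le> lam i" "\<forall>i\<in>{Suc k..n}. 0 \<le> lam i \<and> lam i \<le> t - rho"
  shows "lam \<in> Fset n k D rho" "t_wf n lam D = t"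
proof -
  have "lam 1 \<le> Max (lam ` {1..n})"
    using assms(2,3) by (intro Max_ge) auto
  moreover have "t + rho \<le> lam 1"
    using assms(2,7) by simp
  ultimately have "t < Max (lam ` {1..n})"
    using assms(4) by linarith
  then have "t_wf n lam D = t"
    using assms(2,3,5,6) by (intro t_wf_eqI) auto
  then show "lam \<in> Fset n k D rho" "t_wf n lam D = t"
    using assms(1,7,8) by (simp_all add: Fset_def)
qed

section \<open>The gap at fixed levels\<close>

definition gap_term :: "real \<Rightarrow> real \<Rightarrow> real \<Rightarrow> real" where
  "gap_term T t x = log 2 (1 + x * T) - max 0 (log 2 (x / t))"

lemma R_rc_minus_R_wf:
  "R_rc n lam T - R_wf n lam t = (\<Sum>i=1..n. gap_term T t (lam i)) / (2 * real n)"
  unfolding R_rc_def R_wf_def gap_term_def by (simp add: sum_subtractf diff_divide_distrib)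

lemma gap_term_below:
  assumes "0 \<le> x" "x \<le> t"
  shows "gap_term T t x = log 2 (1 + x * T)"
proof (cases "x = 0")
  case False
  with assms have "log 2 (x / t) \<le> 0"
    by (simp add: divide_le_eq_1)
  then show ?thesis
    unfolding gap_term_def by simp
qed (simp add: gap_term_def log_def)

lemma gap_term_above:
  assumes "0 < t" "t < x" "0 \<le> T"
  shows "gap_term T t x = (ln (1 + x * T) - ln x + ln t) / ln 2"
proof -
  have "0 < log 2 (x / t)"
    using assms by simp
  then show ?thesis
    using assms unfolding gap_term_def by (simp add: log_def ln_div diff_divide_distrib add_divide_distrib)
qed

lemma rc_distortion_midpoint_concave:
  fixes a b T :: real
  assumes "0 \<le> a" "0 \<le> b" "0 \<le> T"
  shows "a / (1 + a * T) + b / (1 + b * T) \<le> 2 * ((a + b) / 2 / (1 + (a + b) / 2 * T))"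
proof -
  have pos: "0 < 1 + a * T" "0 < 1 + b * T" "0 < 2 + (a + b) * T"
    using assms by (auto intro: add_pos_nonneg)
  have "2 * ((a + b) / 2 / (1 + (a + b) / 2 * T)) - (a / (1 + a * T) + b / (1 + b * T))
        = T * (a - b)^2 / ((1 + a * T) * (1 + b * T) * (2 + (a + b) * T))"
    using pos by (simp add: divide_simps) algebra
  moreover have "0 \<le> T * (a - b)^2 / ((1 + a * T) * (1 + b * T) * (2 + (a + b) * T))"
    using assms pos by simp
  ultimately show ?thesis
    by linarith
qed

lemma log_midpoint_strict_concave:
  fixes a b T :: real
  assumes "0 \<le> a" "0 \<le> b" "0 < T" "a \<noteq> b"
  shows "log 2 (1 + a * T) + log 2 (1 + b * T) < 2 * log 2 (1 + (a + b) / 2 * T)"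
proof -
  have pos: "0 < 1 + a * T" "0 < 1 + b * T" "0 < 1 + (a + b) / 2 * T"
    using assms by (auto intro: add_pos_nonneg)
  have "(1 + a * T) * (1 + b * T) + ((a - b) * T / 2)^2 = (1 + (a + b) / 2 * T)^2"
    by (simp add: field_simps power2_eq_square)
  moreover have "0 < ((a - b) * T / 2)^2"
    using assms by simp
  ultimately have "(1 + a * T) * (1 + b * T) < (1 + (a + b) / 2 * T)^2"
    by linarith
  then have "log 2 ((1 + a * T) * (1 + b * T)) < log 2 ((1 + (a + b) / 2 * T)^2)"
    using pos by simp
  then show ?thesis
    using pos by (simp add: log_mult log_nat_power)
qed

section \<open>Four values above the water level\<close>

lemma card_4_elements:
  assumes "card I = 4"
  obtains i1 i2 i3 i4 where "I = {i1, i2, i3, i4}"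
    "i1 \<noteq> i2" "i1 \<noteq> i3" "i1 \<noteq> i4" "i2 \<noteq> i3" "i2 \<noteq> i4" "i3 \<noteq> i4"
  using assms by (auto simp: card_Suc_eq numeral_eq_Suc)

lemma four_point_direction:
  fixes u :: "'i \<Rightarrow> real"
  assumes "card I = 4" "inj_on u I" "\<And>x. x \<in> I \<Longrightarrow> u x < 1"
  shows "\<exists>v. sum v I = 0 \<and> 0 < (\<Sum>x\<in>I. v x * (u x)^2)
             \<and> (\<Sum>x\<in>I. v x * ((u x)^2 / (1 - u x))) < 0"
proof -
  obtain i1 i2 i3 i4 where I: "I = {i1, i2, i3, i4}"
    and ne: "i1 \<noteq> i2" "i1 \<noteq> i3" "i1 \<noteq> i4" "i2 \<noteq> i3" "i2 \<noteq> i4" "i3 \<noteq> i4"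
    using assms(1) by (rule card_4_elements)
  define a b c d where "a = u i1" "b = u i2" "c = u i3" "d = u i4"
  have "a < 1" "b < 1" "c < 1" "d < 1"
    using assms(3) unfolding I a_b_c_d_def by auto
  then have below: "1 - a \<noteq> 0" "1 - b \<noteq> 0" "1 - c \<noteq> 0" "1 - d \<noteq> 0"
      "0 < (1 - a) * (1 - b) * (1 - c) * (1 - d)"
    by auto
  define K where "K = (a - b) * (a - c) * (a - d) * (b - c) * (b - d) * (c - d)"
  have "0 < sgn K * K"
    using assms(2) ne unfolding I K_def a_b_c_d_def
    by (auto simp: inj_on_def abs_sgn[symmetric] mult.commute)
  (* ddiff f = \<Sum>_j K (u_j - 2) f(u_j) / \<Prod>_{l \<noteq> j} (u_j - u_l) is K times the third
     divided difference of (u - 2) f(u). It vanishes for f = 1, is K for f = u^2, and is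
     -K / \<Prod>_l (1 - u_l) for f = u^2 / (1 - u), as (u - 2) u^2 / (1 - u) is a quadratic
     minus 1 / (1 - u). *)
  define ddiff where "ddiff f =
      (a - 2) * (b - c) * (b - d) * (c - d) * f a - (b - 2) * (a - c) * (a - d) * (c - d) * f b
    + (c - 2) * (a - b) * (a - d) * (b - d) * f c - (d - 2) * (a - b) * (a - c) * (b - c) * f d"
    for f :: "real \<Rightarrow> real"
  have ddiff_const: "ddiff (\<lambda>_. 1) = 0"
    unfolding ddiff_def by algebra
  have ddiff_square: "ddiff (\<lambda>y. y^2) = K"
    unfolding ddiff_def K_def by algebra
  have ddiff_pole: "ddiff (\<lambda>y. y^2 / (1 - y)) = - K / ((1 - a) * (1 - b) * (1 - c) * (1 - d))"
    using below(1-4) unfolding ddiff_def K_def by (simp add: divide_simps) algebra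
  define v where "v x = sgn K *
    (if x = i1 then (a - 2) * (b - c) * (b - d) * (c - d)
     else if x = i2 then - (b - 2) * (a - c) * (a - d) * (c - d)
     else if x = i3 then (c - 2) * (a - b) * (a - d) * (b - d)
     else - (d - 2) * (a - b) * (a - c) * (b - c))" for x
  have sum_v: "(\<Sum>x\<in>I. v x * f (u x)) = sgn K * ddiff f" for f
    using ne unfolding I by (simp add: v_def a_b_c_d_def ddiff_def not_sym algebra_simps)
  show ?thesis
  proof (intro exI conjI)
    show "sum v I = 0"
      using sum_v[of "\<lambda>_. 1"] ddiff_const by simp
    show "0 < (\<Sum>x\<in>I. v x * (u x)^2)"
      using sum_v[of "\<lambda>y. y^2"] ddiff_square \<open>0 < sgn K * K\<close> by simp
    show "(\<Sum>x\<in>I. v x * ((u x)^2 / (1 - u x))) < 0"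
      using sum_v[of "\<lambda>y. y^2 / (1 - y)"] ddiff_pole \<open>0 < sgn K * K\<close> below(5)
      by (simp add: divide_pos_pos)
  qed
qed

lemma rc_distortion_has_derivative:
  fixes x T :: real
  assumes "0 < 1 + x * T"
  shows "((\<lambda>y. y / (1 + y * T)) has_real_derivative (1 / (1 + x * T))^2) (at x)"
  using assms by (auto intro!: derivative_eq_intros simp: field_simps power2_eq_square)

lemma log_ratio_has_derivative:
  fixes x T :: real
  assumes "0 < x" "0 < T"
  defines "u \<equiv> 1 / (1 + x * T)"
  shows "((\<lambda>y. ln (1 + y * T) - ln y) has_real_derivative - T * (u^2 / (1 - u))) (at x)"
proof -
  have "0 < x * T"
    using assms(1,2) by simp
  then have "1 - u = x * T / (1 + x * T)"
    unfolding u_def by (simp add: field_simps)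
  then have "- T * (u^2 / (1 - u)) = - (1 / ((1 + x * T) * x))"
    using assms(1,2) by (simp add: u_def power2_eq_square)
  also have "\<dots> = T / (1 + x * T) - 1 / x"
    using assms(1) \<open>0 < x * T\<close> by (simp add: field_simps)
  finally show ?thesis
    using assms(1) \<open>0 < x * T\<close> by (auto intro!: derivative_eq_intros)
qed

lemma eventually_sum_increases:
  fixes a v f' :: "'i \<Rightarrow> real" and f :: "real \<Rightarrow> real"
  assumes "finite I" "\<And>x. x \<in> I \<Longrightarrow> (f has_real_derivative f' x) (at (a x))"
    and "0 < (\<Sum>x\<in>I. v x * f' x)"
  shows "\<forall>\<^sub>F s in at_right 0. (\<Sum>x\<in>I. f (a x)) < (\<Sum>x\<in>I. f (a x + s * v x))"
proof -
  have "((\<lambda>s. \<Sum>x\<in>I. f (a x + s * v x)) has_real_derivative (\<Sum>x\<in>I. v x * f' x)) (at 0)"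
  proof (rule DERIV_sum)
    fix x assume "x \<in> I"
    have "((\<lambda>s. a x + s * v x) has_real_derivative v x) (at 0)"
      by (auto intro!: derivative_eq_intros)
    then show "((\<lambda>s. f (a x + s * v x)) has_real_derivative v x * f' x) (at 0)"
      using DERIV_chain'[of "\<lambda>s. a x + s * v x" "v x" 0 UNIV f "f' x"] assms(2)[OF \<open>x \<in> I\<close>]
      by (simp add: mult.commute)
  qed
  then obtain d where "0 < d" "\<forall>h>0. h < d \<longrightarrow> (\<Sum>x\<in>I. f (a x)) < (\<Sum>x\<in>I. f (a x + h * v x))"
    using DERIV_pos_inc_right[OF _ assms(3)] by fastforce
  then show ?thesis
    unfolding eventually_at_right_field by auto
qed

lemma eventually_perturbation_gt:
  fixes a v :: "'i \<Rightarrow> real"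
  assumes "finite I" "\<And>x. x \<in> I \<Longrightarrow> c < a x"
  shows "\<forall>\<^sub>F s in at_right 0. \<forall>x\<in>I. c < a x + s * v x"
proof -
  have "\<forall>\<^sub>F s in at_right 0. c < a x + s * v x" if "x \<in> I" for x
  proof (rule order_tendstoD(1))
    show "((\<lambda>s. a x + s * v x) \<longlongrightarrow> a x) (at_right 0)"
      by (auto intro!: tendsto_eq_intros)
  qed (use assms(2) that in auto)
  then show ?thesis
    using assms(1) by (simp add: eventually_ball_finite)
qed

lemma four_values_improvable:
  fixes a :: "'i \<Rightarrow> real"
  assumes "card I = 4" "inj_on a I" "0 \<le> c" "\<And>x. x \<in> I \<Longrightarrow> c < a x" "0 < T"
  shows "\<exists>b. sum b I = sum a I \<and> (\<forall>x\<in>I. c < b x)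
    \<and> (\<Sum>x\<in>I. a x / (1 + a x * T)) < (\<Sum>x\<in>I. b x / (1 + b x * T))
    \<and> (\<Sum>x\<in>I. ln (1 + a x * T) - ln (a x)) < (\<Sum>x\<in>I. ln (1 + b x * T) - ln (b x))"
proof -
  have "finite I"
    using assms(1) by (metis card.infinite zero_neq_numeral)
  have a_pos: "0 < a x" "0 < 1 + a x * T" if "x \<in> I" for x
    using assms(3-5) that[THEN assms(4)] by (auto intro!: add_pos_pos mult_pos_pos)
  define u where "u x = 1 / (1 + a x * T)" for x
  have "inj_on u I"
    using assms(2,5) a_pos by (auto simp: inj_on_def u_def)
  moreover have "u x < 1" if "x \<in> I" for x
    using a_pos[OF that] assms(5) by (simp add: u_def)
  ultimately obtain v where v: "sum v I = 0" "0 < (\<Sum>x\<in>I. v x * (u x)^2)"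
      "(\<Sum>x\<in>I. v x * ((u x)^2 / (1 - u x))) < 0"
    using four_point_direction[OF assms(1)] by blast
  have "((\<lambda>y. y / (1 + y * T)) has_real_derivative (u x)^2) (at (a x))" if "x \<in> I" for x
    using rc_distortion_has_derivative[OF a_pos(2)[OF that]] by (simp add: u_def)
  then have ev_distortion: "\<forall>\<^sub>F s in at_right 0.
      (\<Sum>x\<in>I. a x / (1 + a x * T)) < (\<Sum>x\<in>I. (a x + s * v x) / (1 + (a x + s * v x) * T))"
    using eventually_sum_increases[OF \<open>finite I\<close> _ v(2)] by blast
  have rate_deriv:
    "((\<lambda>y. ln (1 + y * T) - ln y) has_real_derivative - T * ((u x)^2 / (1 - u x))) (at (a x))"
    if "x \<in> I" for x
    using log_ratio_has_derivative[OF a_pos(1)[OF that] assms(5)] by (simp add: u_def)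
  have "(\<Sum>x\<in>I. v x * (- T * ((u x)^2 / (1 - u x))))
      = - T * (\<Sum>x\<in>I. v x * ((u x)^2 / (1 - u x)))"
    unfolding sum_distrib_left by (simp add: algebra_simps)
  then have rate_slope: "0 < (\<Sum>x\<in>I. v x * (- T * ((u x)^2 / (1 - u x))))"
    using v(3) assms(5) by (simp add: mult_pos_neg)
  have ev_rate: "\<forall>\<^sub>F s in at_right 0.
      (\<Sum>x\<in>I. ln (1 + a x * T) - ln (a x))
      < (\<Sum>x\<in>I. ln (1 + (a x + s * v x) * T) - ln (a x + s * v x))"
    using eventually_sum_increases[OF \<open>finite I\<close> rate_deriv rate_slope] .
  have ev_box: "\<forall>\<^sub>F s in at_right 0. \<forall>x\<in>I. c < a x + s * v x"
    using eventually_perturbation_gt[OF \<open>finite I\<close> assms(4)] .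
  obtain s where "(\<Sum>x\<in>I. a x / (1 + a x * T)) < (\<Sum>x\<in>I. (a x + s * v x) / (1 + (a x + s * v x) * T))"
      "(\<Sum>x\<in>I. ln (1 + a x * T) - ln (a x))
       < (\<Sum>x\<in>I. ln (1 + (a x + s * v x) * T) - ln (a x + s * v x))"
      "\<forall>x\<in>I. c < a x + s * v x"
    using eventually_happens'[OF _ eventually_conj[OF ev_distortion eventually_conj[OF ev_rate ev_box]]]
    by auto
  moreover have "(\<Sum>x\<in>I. a x + s * v x) = sum a I"
    using v(1) by (simp add: sum.distrib sum_distrib_left[symmetric])
  ultimately show ?thesis
    by (intro exI[of _ "\<lambda>x. a x + s * v x"]) auto
qed

section \<open>Maximisers of the gap\<close>

lemma sum_gap_term_above:
  assumes "finite I" "0 < t" "0 \<le> T" "\<And>x. x \<in> I \<Longrightarrow> t < f x"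
  shows "(\<Sum>x\<in>I. gap_term T t (f x))
         = ((\<Sum>x\<in>I. ln (1 + f x * T) - ln (f x)) + real (card I) * ln t) / ln 2"
proof -
  have "(\<Sum>x\<in>I. gap_term T t (f x)) = (\<Sum>x\<in>I. (ln (1 + f x * T) - ln (f x) + ln t) / ln 2)"
    using assms(2-4) by (intro sum.cong) (auto simp: gap_term_above)
  then show ?thesis
    by (simp add: sum_divide_distrib[symmetric] sum.distrib)
qed

locale Gap_maximizer =
  fixes n k :: nat and D rho :: real and lam :: "nat \<Rightarrow> real"
  assumes n_pos: "1 \<le> n" and k_le_n: "k \<le> n"
    and D_pos: "0 < D" and D_less_1: "D < 1" and rho_pos: "0 < rho"
    and feasible: "lam \<in> Fset n k D rho"
    and maximal: "\<forall>lam' \<in> Fset n k D rho. Gap n D lam' \<le> Gap n D lam"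
begin

abbreviation t :: real where "t \<equiv> t_wf n lam D"

abbreviation T :: real where "T \<equiv> T_rc n lam D"

lemma lam_Lset: "lam \<in> Lset n"
  using feasible unfolding Fset_def by auto

lemma head_ge: "i \<in> {1..k} \<Longrightarrow> t + rho \<le> lam i"
  using feasible unfolding Fset_def Let_def by auto

lemma tail_box: "i \<in> {Suc k..n} \<Longrightarrow> 0 \<le> lam i \<and> lam i \<le> t - rho"
  using feasible unfolding Fset_def Let_def by auto

lemmas t_spec = t_wf_spec[OF lam_Lset n_pos D_pos D_less_1]

lemmas T_spec = T_rc_spec[OF lam_Lset n_pos D_pos D_less_1]

lemma head_nonempty: "1 \<le> k"
proof (rule ccontr)
  assume "\<not> 1 \<le> k"
  obtain j where "j \<in> {1..n}" "lam j = Max (lam ` {1..n})"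
    using n_pos by (rule Max_coordinate)
  moreover from this have "lam j \<le> t - rho"
    using tail_box[of j] \<open>\<not> 1 \<le> k\<close> by auto
  ultimately show False
    using t_spec(2) rho_pos by linarith
qed

lemma Gap_eq: "Gap n D lam = (\<Sum>i=1..n. gap_term T t (lam i)) / (2 * real n)"
  unfolding Gap_def RR_rc_def RR_wf_def by (rule R_rc_minus_R_wf)

lemma override_feasible:
  assumes I: "I \<subseteq> {1..k} \<or> I \<subseteq> {Suc k..n}"
    and head: "\<And>i. i \<in> I \<Longrightarrow> i \<le> k \<Longrightarrow> t + rho \<le> h i"
    and tail: "\<And>i. i \<in> I \<Longrightarrow> k < i \<Longrightarrow> 0 \<le> h i \<and> h i \<le> t - rho"
    and mass: "sum h I = sum lam I"
  shows "override_on lam h I \<in> Fset n k D rho" "t_wf n (override_on lam h I) D = t"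
proof -
  define lam' where "lam' = override_on lam h I"
  have "I \<subseteq> {1..n}"
    using I k_le_n by auto
  have head': "\<forall>i\<in>{1..k}. t + rho \<le> lam' i"
    using head head_ge by (auto simp: lam'_def override_on_def)
  have tail': "\<forall>i\<in>{Suc k..n}. 0 \<le> lam' i \<and> lam' i \<le> t - rho"
    using tail tail_box by (auto simp: lam'_def override_on_def)
  have "0 \<le> h i" if "i \<in> I" for i
    using head[OF that] tail[OF that] t_spec(1) rho_pos by (cases "i \<le> k") auto
  then have "lam' \<in> Lset n"
    unfolding lam'_def using Lset_override_on[OF lam_Lset \<open>I \<subseteq> {1..n}\<close> _ mass] by blast
  have "(\<Sum>i=Suc k..n. lam' i) = (\<Sum>i=Suc k..n. lam i)"
    using I
  proof
    assume "I \<subseteq> {1..k}"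
    then show ?thesis
      by (intro sum.cong) (auto simp: lam'_def override_on_def)
  next
    assume "I \<subseteq> {Suc k..n}"
    then show ?thesis
      using sum_override_on[of "{Suc k..n}" I "\<lambda>x. x" lam h] mass by (simp add: lam'_def)
  qed
  moreover have "D_wf n lam' t = (real k * t + (\<Sum>i=Suc k..n. lam' i)) / real n"
    using head' tail' rho_pos by (intro D_wf_split[OF k_le_n]) force+
  moreover have "D_wf n lam t = (real k * t + (\<Sum>i=Suc k..n. lam i)) / real n"
    using head_ge tail_box rho_pos by (intro D_wf_split[OF k_le_n]) force+
  ultimately have "D_wf n lam' t = D_wf n lam t"
    by simp
  then have "D_wf n lam' t = D"
    using t_spec(3) by simp
  then show "override_on lam h I \<in> Fset n k D rho" "t_wf n (override_on lam h I) D = t"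
    using Fset_I[OF \<open>lam' \<in> Lset n\<close> head_nonempty k_le_n rho_pos t_spec(1) _ head' tail']
    by (simp_all add: lam'_def)
qed

lemma no_improving_override:
  assumes I: "I \<subseteq> {1..k} \<or> I \<subseteq> {Suc k..n}"
    and head: "\<And>i. i \<in> I \<Longrightarrow> i \<le> k \<Longrightarrow> t + rho \<le> h i"
    and tail: "\<And>i. i \<in> I \<Longrightarrow> k < i \<Longrightarrow> 0 \<le> h i \<and> h i \<le> t - rho"
    and mass: "sum h I = sum lam I"
    and distortion: "(\<Sum>i\<in>I. lam i / (1 + lam i * T)) \<le> (\<Sum>i\<in>I. h i / (1 + h i * T))"
  shows "(\<Sum>i\<in>I. gap_term T t (h i)) \<le> (\<Sum>i\<in>I. gap_term T t (lam i))"
proof -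
  define lam' where "lam' = override_on lam h I"
  note lam'_feasible = override_feasible[OF I head tail mass, folded lam'_def]
  have "lam' \<in> Lset n"
    using lam'_feasible(1) unfolding Fset_def by auto
  have "I \<subseteq> {1..n}"
    using I k_le_n by auto
  have "(\<Sum>i=1..n. lam i / (1 + lam i * T)) \<le> (\<Sum>i=1..n. lam' i / (1 + lam' i * T))"
    using sum_override_on[OF _ \<open>I \<subseteq> {1..n}\<close>, of "\<lambda>x. x / (1 + x * T)" lam h] distortion
    by (simp add: lam'_def)
  then have "D_rc n lam T \<le> D_rc n lam' T"
    unfolding D_rc_def by (simp add: divide_right_mono)
  then have "D \<le> D_rc n lam' T"
    using T_spec(2) by simp
  then have "R_rc n lam' T - R_wf n lam' t \<le> Gap n D lam'"
    using R_rc_le_RR_rc[OF \<open>lam' \<in> Lset n\<close> n_pos D_pos D_less_1 T_spec(1)] lam'_feasible(2)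
    unfolding Gap_def RR_wf_def by simp
  also have "\<dots> \<le> Gap n D lam"
    using maximal lam'_feasible(1) by blast
  finally have "(\<Sum>i=1..n. gap_term T t (lam' i)) \<le> (\<Sum>i=1..n. gap_term T t (lam i))"
    unfolding R_rc_minus_R_wf Gap_eq using n_pos by (simp add: divide_le_cancel)
  then show ?thesis
    using sum_override_on[OF _ \<open>I \<subseteq> {1..n}\<close>, of "gap_term T t" lam h] by (simp add: lam'_def)
qed

lemma tail_constant:
  assumes "i \<in> {Suc k..n}" "j \<in> {Suc k..n}"
  shows "lam i = lam j"
proof (rule ccontr)
  assume "lam i \<noteq> lam j"
  define m where "m = (lam i + lam j) / 2"
  have box: "0 \<le> lam i" "lam i \<le> t - rho" "0 \<le> lam j" "lam j \<le> t - rho"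
    using tail_box assms by auto
  have "i \<noteq> j"
    using \<open>lam i \<noteq> lam j\<close> by auto
  have "(\<Sum>x\<in>{i, j}. gap_term T t m) \<le> (\<Sum>x\<in>{i, j}. gap_term T t (lam x))"
  proof (rule no_improving_override)
    show "{i, j} \<subseteq> {1..k} \<or> {i, j} \<subseteq> {Suc k..n}"
      using assms by auto
    show "t + rho \<le> m" if "x \<in> {i, j}" "x \<le> k" for x
      using that assms by auto
    show "0 \<le> m \<and> m \<le> t - rho"
      using box by (simp add: m_def)
    show "(\<Sum>x\<in>{i, j}. m) = sum lam {i, j}"
      using \<open>i \<noteq> j\<close> by (simp add: m_def)
    show "(\<Sum>x\<in>{i, j}. lam x / (1 + lam x * T)) \<le> (\<Sum>x\<in>{i, j}. m / (1 + m * T))"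
      using \<open>i \<noteq> j\<close> rc_distortion_midpoint_concave[of "lam i" "lam j" T] box T_spec(1)
      by (simp add: m_def)
  qed
  then have "gap_term T t m + gap_term T t m \<le> gap_term T t (lam i) + gap_term T t (lam j)"
    using \<open>i \<noteq> j\<close> by simp
  moreover have "gap_term T t x = log 2 (1 + x * T)" if "0 \<le> x" "x \<le> t - rho" for x
    using that rho_pos by (simp add: gap_term_below)
  ultimately show False
    using box log_midpoint_strict_concave[OF box(1,3) T_spec(1) \<open>lam i \<noteq> lam j\<close>]
    by (simp add: m_def)
qed

lemma card_tail_values: "card (lam ` {Suc k..n}) \<le> 1"
  unfolding One_nat_def card_le_Suc0_iff_eq[OF finite_imageI[OF finite_atLeastAtMost]]
  by (blast intro: tail_constant)

lemma card_head_values_above: "card (lam ` {i \<in> {1..k}. t + rho < lam i}) \<le> 3"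
proof (rule ccontr)
  define H where "H = {i \<in> {1..k}. t + rho < lam i}"
  assume "\<not> card (lam ` {i \<in> {1..k}. t + rho < lam i}) \<le> 3"
  then obtain S where "S \<subseteq> lam ` H" "card S = 4" "finite S"
    using obtain_subset_with_card_n[of 4 "lam ` H"] unfolding H_def by force
  define I where "I = inv_into H lam ` S"
  have "finite I"
    using \<open>finite S\<close> by (simp add: I_def)
  have "I \<subseteq> H"
    using \<open>S \<subseteq> lam ` H\<close> by (auto simp: I_def inv_into_into)
  have "card I = 4"
    using card_image[OF inj_on_inv_into[OF \<open>S \<subseteq> lam ` H\<close>]] \<open>card S = 4\<close> by (simp add: I_def)
  moreover have "inj_on lam I"
    using \<open>card I = 4\<close> \<open>card S = 4\<close> image_inv_into_cancel[OF refl \<open>S \<subseteq> lam ` H\<close>]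
    by (intro eq_card_imp_inj_on[OF \<open>finite I\<close>]) (simp add: I_def)
  moreover have above: "t + rho < lam x" if "x \<in> I" for x
    using \<open>I \<subseteq> H\<close> that by (auto simp: H_def)
  ultimately obtain b where b: "sum b I = sum lam I" "\<forall>x\<in>I. t + rho < b x"
      "(\<Sum>x\<in>I. lam x / (1 + lam x * T)) < (\<Sum>x\<in>I. b x / (1 + b x * T))"
      "(\<Sum>x\<in>I. ln (1 + lam x * T) - ln (lam x)) < (\<Sum>x\<in>I. ln (1 + b x * T) - ln (b x))"
    using four_values_improvable[of I lam "t + rho" T] t_spec(1) rho_pos T_spec(1) by auto
  have "I \<subseteq> {1..k}"
    using \<open>I \<subseteq> H\<close> by (auto simp: H_def)
  then have "(\<Sum>x\<in>I. gap_term T t (b x)) \<le> (\<Sum>x\<in>I. gap_term T t (lam x))"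
    using b by (intro no_improving_override) auto
  moreover have "t < lam x" "t < b x" if "x \<in> I" for x
    using above[OF that] b(2) that rho_pos by force+
  then have "(\<Sum>x\<in>I. gap_term T t (lam x)) < (\<Sum>x\<in>I. gap_term T t (b x))"
    using b(4) sum_gap_term_above[OF \<open>finite I\<close> t_spec(1) less_imp_le[OF T_spec(1)]]
    by (simp add: divide_strict_right_mono)
  ultimately show False
    by linarith
qed

lemma card_head_values: "card (lam ` {1..k}) \<le> 4"
proof -
  define S where "S = lam ` {i \<in> {1..k}. t + rho < lam i}"
  have "lam ` {1..k} \<subseteq> insert (t + rho) S"
  proof
    fix y assume "y \<in> lam ` {1..k}"
    then obtain i where "i \<in> {1..k}" "y = lam i"
      by blast
    then show "y \<in> insert (t + rho) S"
      using head_ge[of i] unfolding S_def by (cases "lam i = t + rho") auto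
  qed
  then have "card (lam ` {1..k}) \<le> card (insert (t + rho) S)"
    by (rule card_mono[rotated]) (simp add: S_def)
  also have "\<dots> \<le> Suc (card S)"
    by (simp add: S_def card_insert_if)
  finally show ?thesis
    using card_head_values_above unfolding S_def by linarith
qed

end

theorem claimD3:
  fixes n k :: nat and Dstar eps rho :: real and lamstar :: "nat \<Rightarrow> real"
  assumes "1 \<le> n" and "k \<le> n"
    and "0 < Dstar" and "Dstar < 1"
    and "0 < eps" and "eps < Dstar"
    and "rho = eps * (Dstar - eps) / (2 * real n)"
    and "lamstar \<in> Fset n k Dstar rho"
    and "\<forall>lam \<in> Fset n k Dstar rho. Gap n Dstar lam \<le> Gap n Dstar lamstar"
  shows "card (lamstar ` {1..n}) \<le> 5"
proof -
  interpret Gap_maximizer n k Dstar rho lamstar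
    using assms by unfold_locales auto
  have "{1..n} = {1..k} \<union> {Suc k..n}"
    using assms(2) by auto
  then have "card (lamstar ` {1..n}) \<le> card (lamstar ` {1..k}) + card (lamstar ` {Suc k..n})"
    by (simp add: image_Un card_Un_le)
  then show ?thesis
    using card_head_values card_tail_values by linarith
qed

end
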